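(* For every Pólya frequency power series $f(t)=\sum_{k\ge1}f_kt^k$ with $f_1\neq0$, there exists a constant $\alpha>0$ such that the quasi-Riordan array $\left[\frac1{1-\alpha t},f(t)\right]$ is not totally positive, although both $\frac1{1-\alpha t}$ and $f(t)$ are Pólya frequency power series.
   Context: For formal power series $g(t)=\sum_{n\ge0}g_nt^n$ with $g_0=1$ and $f(t)=\sum_{n\ge1}f_nt^n$ with $f_1\ne0$, the quasi-Riordan array $[g,f]$ is the infinite lower triangular matrix $(r_{n,k})_{n,k\ge0}$ with $r_{n,0}=g_n$ and $r_{n,k}=f_{n-k+1}$ for $k\ge1$ (with $f_j=0$ for $j\le0$), i.e. its columns have generating functions $g,f,tf,t^2f,\dots$. An infinite matrix is totally positive (TP) if all its minors are nonnegative. A sequence $(a_n)_{n\ge0}$ of nonnegative reals is a Pólya frequency sequence if its Toeplitz matrix $[a_{i-j}]_{i,j\ge0}$ (with $a_m=0$ for $m<0$) is TP; a formal power series is a Pólya frequency power series if its coefficient sequence is a Pólya frequency sequence. *)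

theory Defs
  imports "HOL-Computational_Algebra.Formal_Power_Series" "Jordan_Normal_Form.Determinant"
begin

definition totally_positive :: "(nat \<Rightarrow> nat \<Rightarrow> real) \<Rightarrow> bool" where
  "totally_positive A \<longleftrightarrow>
     (\<forall>k r c. strict_mono_on {..<k} r \<and> strict_mono_on {..<k} c \<longrightarrow>
        det (mat k k (\<lambda>(i, j). A (r i) (c j))) \<ge> 0)"

definition toeplitz :: "(nat \<Rightarrow> real) \<Rightarrow> nat \<Rightarrow> nat \<Rightarrow> real" where
  "toeplitz a i j = (if j \<le> i then a (i - j) else 0)"

definition polya_frequency_seq :: "(nat \<Rightarrow> real) \<Rightarrow> bool" where
  "polya_frequency_seq a \<longleftrightarrow> (\<forall>n. a n \<ge> 0) \<and> totally_positive (toeplitz a)"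

definition polya_frequency_fps :: "real fps \<Rightarrow> bool" where
  "polya_frequency_fps f \<longleftrightarrow> polya_frequency_seq (fps_nth f)"

text \<open>Quasi-Riordan array [g, f]: column 0 is g, column k>=1 is t^(k-1) f.\<close>
definition quasi_riordan :: "real fps \<Rightarrow> real fps \<Rightarrow> nat \<Rightarrow> nat \<Rightarrow> real" where
  "quasi_riordan g f n k =
     (if k = 0 then fps_nth g n
      else if k \<le> n + 1 then fps_nth f (n + 1 - k) else 0)"

end

theory Submission
  imports Defs
begin

text \<open>The minor of \<open>[1 / (1 - \<alpha> t), f]\<close> in rows 1, 2 and columns 0, 1 is
  \<open>\<alpha> f\<^sub>2 - \<alpha>\<^sup>2 f\<^sub>1 = \<alpha> (f\<^sub>2 - \<alpha> f\<^sub>1)\<close>, which is negative as soon as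
  \<open>\<alpha> > f\<^sub>2 / f\<^sub>1\<close> (here \<open>f\<^sub>1 > 0\<close> because Polya frequency sequences are nonnegative).
  Yet \<open>1 / (1 - \<alpha> t)\<close> is a Polya frequency series for every \<open>\<alpha> > 0\<close>:
  its Toeplitz matrix, with entries \<open>\<alpha> ^ (i - j) = \<alpha> ^ i * \<alpha> ^ -j\<close> for \<open>j \<le> i\<close>,
  is a positive diagonal rescaling of the lower triangular all-ones matrix, whose minors are nonnegative.\<close>

lemma fps_nth_inverse_geometric:
  "fps_nth (inverse (1 - fps_const (a::'a::field) * fps_X)) n = a ^ n"
proof -
  have "(1 - fps_const a * fps_X) * Abs_fps (\<lambda>n. a ^ n) = 1"
    by (rule fps_ext) (auto simp: algebra_simps fps_X_mult_nth power_eq_if)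
  then have "inverse (1 - fps_const a * fps_X) = Abs_fps (\<lambda>n. a ^ n)"
    by (rule fps_inverse_unique)
  then show ?thesis by simp
qed

lemma det_mat_diag: "det (mat_diag n f) = (\<Prod>i<n. f i)"
proof -
  have "upper_triangular (mat_diag n f)" by (auto simp: mat_diag_def)
  then have "det (mat_diag n f) = prod_list (diag_mat (mat_diag n f))"
    by (rule det_upper_triangular) (rule mat_diag_dim)
  also have "\<dots> = (\<Prod>i<n. f i)"
    by (simp add: diag_mat_def mat_diag_def prod.list_conv_set_nth lessThan_atLeast0 cong: map_cong)
  finally show ?thesis .
qed

lemma det_scale_rows_cols:
  fixes B :: "nat \<Rightarrow> nat \<Rightarrow> 'a::comm_ring_1"
  shows "det (mat n n (\<lambda>(i, j). x i * y j * B i j)) =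
    (\<Prod>i<n. x i) * (\<Prod>j<n. y j) * det (mat n n (\<lambda>(i, j). B i j))"
proof -
  let ?B = "mat n n (\<lambda>(i, j). B i j)"
  have "mat n n (\<lambda>(i, j). x i * y j * B i j) = mat_diag n x * ?B * mat_diag n y"
    by (simp add: mat_diag_mult_left[of _ n n] mat_diag_mult_right[of _ n n])
      (rule eq_matI, auto)
  also have "det \<dots> = det (mat_diag n x) * det ?B * det (mat_diag n y)"
    using mat_diag_dim[of n x] mat_diag_dim[of n y] mat_carrier[of n n]
    by (simp add: det_mult[where n = n] mult_carrier_mat[where nr = n and nc = n and n = n])
  finally show ?thesis by (simp add: det_mat_diag ac_simps)
qed

lemma totally_positive_scale:
  assumes "totally_positive A" and "\<And>i. x i \<ge> 0" and "\<And>j. y j \<ge> 0"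
  shows "totally_positive (\<lambda>i j. x i * y j * A i j)"
  unfolding totally_positive_def
proof (intro allI impI)
  fix k :: nat and r c :: "nat \<Rightarrow> nat"
  assume "strict_mono_on {..<k} r \<and> strict_mono_on {..<k} c"
  then have "det (mat k k (\<lambda>(i, j). A (r i) (c j))) \<ge> 0"
    using assms(1) by (simp add: totally_positive_def)
  then show "det (mat k k (\<lambda>(i, j). x (r i) * y (c j) * A (r i) (c j))) \<ge> 0"
    using det_scale_rows_cols[of k "x \<circ> r" "y \<circ> c" "\<lambda>i j. A (r i) (c j)"] assms(2,3)
    by (simp add: prod_nonneg)
qed

lemma polya_frequency_seq_nonneg: "polya_frequency_seq a \<Longrightarrow> a n \<ge> 0"
  by (simp add: polya_frequency_seq_def)

lemma polya_frequency_seq_mult_geometric: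
  assumes "polya_frequency_seq a" and "c > 0"
  shows "polya_frequency_seq (\<lambda>n. c ^ n * a n)"
proof -
  have "toeplitz (\<lambda>n. c ^ n * a n) = (\<lambda>i j. c ^ i * inverse c ^ j * toeplitz a i j)"
    using assms(2) by (auto simp: toeplitz_def fun_eq_iff power_diff power_inverse divide_inverse)
  moreover have "totally_positive \<dots>"
    using assms by (intro totally_positive_scale) (simp_all add: polya_frequency_seq_def)
  ultimately show ?thesis
    using assms by (simp add: polya_frequency_seq_def polya_frequency_seq_nonneg)
qed

text \<open>If \<open>c 1 \<le> r 0\<close>, the first two columns coincide; otherwise the first row is
  \<open>(1, 0, \<dots>, 0)\<close> and Laplace expansion reduces to the minor with rows and columns shifted.\<close>
lemma det_staircase_minor_nonneg:
  fixes r c :: "nat \<Rightarrow> nat"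
  assumes "strict_mono_on {..<k} r" and "strict_mono_on {..<k} c"
  shows "det (mat k k (\<lambda>(i, j). if c j \<le> r i then 1 else 0)) \<ge> (0::'a::linordered_idom)"
  using assms
proof (induction k arbitrary: r c)
  case 0
  then show ?case by simp
next
  case (Suc n)
  define B :: "'a mat" where "B = mat (Suc n) (Suc n) (\<lambda>(i, j). if c j \<le> r i then 1 else 0)"
  have B: "B \<in> carrier_mat (Suc n) (Suc n)" by (simp add: B_def)
  consider "n \<ge> 1" "c 1 \<le> r 0" | "\<And>j. j < n \<Longrightarrow> r 0 < c (Suc j)"
  proof (cases "n \<ge> 1 \<and> c 1 \<le> r 0")
    case False
    have "c 1 \<le> c (Suc j)" if "j < n" for j
      using Suc.prems(2) that by (cases "j = 0") (auto simp: strict_mono_on_def intro: less_imp_le)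
    with False show ?thesis using that by fastforce
  qed auto
  then have "det B \<ge> 0"
  proof cases
    case 1
    have "col B 0 = col B 1"
    proof (rule eq_vecI)
      fix i assume "i < dim_vec (col B 1)"
      then have i: "i < Suc n" by (simp add: B_def)
      have "c 0 < c 1" using Suc.prems(2) 1 by (simp add: strict_mono_on_def)
      moreover have "r 0 \<le> r i"
        using Suc.prems(1) i by (cases "i = 0") (auto simp: strict_mono_on_def intro: less_imp_le)
      ultimately show "col B 0 $ i = col B 1 $ i" using 1 i by (auto simp: B_def)
    qed (simp add: B_def)
    then have "det B = 0" using 1 by (intro det_identical_columns[OF B, of 0 1]) auto
    then show ?thesis by simp
  next
    case 2
    have "det B = (\<Sum>j<Suc n. B $$ (0, j) * cofactor B 0 j)"
      by (rule laplace_expansion_row[OF B]) simp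
    also have "\<dots> = B $$ (0, 0) * cofactor B 0 0 + (\<Sum>j<n. B $$ (0, Suc j) * cofactor B 0 (Suc j))"
      by (rule sum.lessThan_Suc_shift)
    also have "\<dots> = B $$ (0, 0) * cofactor B 0 0"
      using 2 by (simp add: B_def not_le[symmetric])
    also have "\<dots> = B $$ (0, 0) * det (mat n n (\<lambda>(i, j). if c (Suc j) \<le> r (Suc i) then 1 else 0))"
    proof -
      have "mat_delete B 0 0 = mat n n (\<lambda>(i, j). if c (Suc j) \<le> r (Suc i) then 1 else 0)"
        by (rule eq_matI) (auto simp: mat_delete_def B_def)
      then show ?thesis by (simp add: cofactor_def)
    qed
    also have "\<dots> \<ge> 0"
    proof (rule mult_nonneg_nonneg)
      show "B $$ (0, 0) \<ge> 0" by (simp add: B_def)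
      have "strict_mono_on {..<n} (r \<circ> Suc)" and "strict_mono_on {..<n} (c \<circ> Suc)"
        using Suc.prems by (auto simp: strict_mono_on_def)
      then show "det (mat n n (\<lambda>(i, j). if c (Suc j) \<le> r (Suc i) then 1 else 0)) \<ge> (0::'a)"
        using Suc.IH by fastforce
    qed
    finally show ?thesis .
  qed
  then show ?case by (simp add: B_def)
qed

lemma polya_frequency_seq_one: "polya_frequency_seq (\<lambda>_. 1)"
  unfolding polya_frequency_seq_def totally_positive_def toeplitz_def
  using det_staircase_minor_nonneg[where 'a = real] by (simp add: if_distrib)

lemma polya_frequency_fps_geometric:
  assumes "a > 0"
  shows "polya_frequency_fps (inverse (1 - fps_const a * fps_X))"
proof -
  have "fps_nth (inverse (1 - fps_const a * fps_X)) = (\<lambda>n. a ^ n * 1)"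
    by (simp add: fun_eq_iff fps_nth_inverse_geometric)
  then show ?thesis
    using polya_frequency_seq_mult_geometric[OF polya_frequency_seq_one assms]
    by (simp add: polya_frequency_fps_def)
qed

lemma det_mat_2: "det (mat 2 2 g) = g (0, 0) * g (1, 1) - g (0, 1) * (g (1, 0) :: 'a::comm_ring_1)"
proof -
  have G: "mat 2 2 g \<in> carrier_mat 2 2" by simp
  have "det (mat 2 2 g) = (\<Sum>j<2. mat 2 2 g $$ (0, j) * cofactor (mat 2 2 g) 0 j)"
    by (rule laplace_expansion_row[OF G]) simp
  also have "\<dots> = g (0, 0) * g (1, 1) - g (0, 1) * g (1, 0)"
    by (simp add: numeral_2_eq_2 cofactor_def det_single mat_delete_carrier mat_delete_def)
  finally show ?thesis .
qed

lemma totally_positive_2x2_minor: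
  assumes "totally_positive A" and "i < i'" and "j < j'"
  shows "A i j' * A i' j \<le> A i j * A i' j'"
proof -
  let ?r = "\<lambda>k::nat. if k = 0 then i else i'" and ?c = "\<lambda>k::nat. if k = 0 then j else j'"
  have "strict_mono_on {..<2} ?r" and "strict_mono_on {..<2} ?c"
    using assms(2,3) by (auto simp: strict_mono_on_def)
  then have "det (mat 2 2 (\<lambda>(k, l). A (?r k) (?c l))) \<ge> 0"
    using assms(1) by (simp add: totally_positive_def)
  then show ?thesis by (simp add: det_mat_2)
qed

lemma quasi_riordan_geometric_not_totally_positive:
  assumes "a > 0" and "fps_nth f 2 < a * fps_nth f 1"
  shows "\<not> totally_positive (quasi_riordan (inverse (1 - fps_const a * fps_X)) f)"
proof
  assume "totally_positive (quasi_riordan (inverse (1 - fps_const a * fps_X)) f)"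
  from totally_positive_2x2_minor[OF this, of 1 2 0 1]
  have "fps_nth f 1 * a ^ 2 \<le> a * fps_nth f 2"
    by (simp add: quasi_riordan_def fps_nth_inverse_geometric)
  then have "a * (a * fps_nth f 1 - fps_nth f 2) \<le> 0"
    by (simp add: power2_eq_square algebra_simps)
  moreover have "a * (a * fps_nth f 1 - fps_nth f 2) > 0"
    using assms by simp
  ultimately show False by simp
qed

theorem corollary4p3:
  fixes f :: "real fps"
  assumes "fps_nth f 0 = 0" and "fps_nth f 1 \<noteq> 0" and "polya_frequency_fps f"
  shows "\<exists>\<alpha>::real. \<alpha> > 0 \<and>
           \<not> totally_positive (quasi_riordan (inverse (1 - fps_const \<alpha> * fps_X)) f) \<and>
           polya_frequency_fps (inverse (1 - fps_const \<alpha> * fps_X)) \<and>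
           polya_frequency_fps f"
proof -
  have f_nonneg: "fps_nth f n \<ge> 0" for n
    using assms(3) by (simp add: polya_frequency_fps_def polya_frequency_seq_nonneg)
  then have f1: "fps_nth f 1 > 0"
    using assms(2) by (simp add: order_less_le)
  define \<alpha> where "\<alpha> = fps_nth f 2 / fps_nth f 1 + 1"
  have "\<alpha> > 0"
    using f_nonneg[of 2] f1 by (simp add: \<alpha>_def add_nonneg_pos)
  moreover have "fps_nth f 2 < \<alpha> * fps_nth f 1"
    using f1 by (simp add: \<alpha>_def field_simps)
  ultimately show ?thesis
    using quasi_riordan_geometric_not_totally_positive polya_frequency_fps_geometric assms(3)
    by blast
qed

end
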